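(* Let $\mathcal C$ be a concept hierarchy, $r_1,r_2,\epsilon\in[0,1]$, $a>0$ a real with $r_1\le ar_2(1-\epsilon)$, $m$ a positive integer, and let $\mathcal L$ be the network defined below with fixed sets $F$ and $E$ satisfying the stated constraints. Then for every $B\subseteq C_0$ presented at time 0 and every $c\in supp_{r_2}(B)$, at least $m(1-\epsilon)$ of the neurons $v\in reps(c)$ fire at time $level(c)$.
   Context: Concept hierarchies: fix positive integers $\ell_{max},n,k$. A universal set $D$ of concepts is partitioned into disjoint sets $D_0,\dots,D_{\ell_{max}}$ with $|D_0|=n$; $level(c)=\ell$ for $c\in D_\ell$. A concept hierarchy $\mathcal C$ consists of $C\subseteq D$, with $C_\ell=C\cap D_\ell$, and for each $c\in C_\ell$ with $1\le\ell\le\ell_{max}$ a set $children(c)\subseteq C_{\ell-1}$, such that $|C_{\ell_{max}}|=k$, $|children(c)|=k$ for all such $c$, and $children(c)\cap children(c')=\emptyset$ for distinct $c,c'\in C_\ell$. For $B\subseteq D_0$ and $r\in[0,1]$: $B(0)=B\cap C_0$; for $1\le\ell\le\ell_{max}$, $B(\ell)=\{c\in C_\ell:|children(c)\cap B(\ell-1)|\ge rk\}$; $supp_r(B)=\bigcup_{\ell}B(\ell)$. Network $\mathcal L$: neurons partitioned into layers $N_0,\dots,N_{\ell_{max}}$. Each $c\in D_0$ has a set $reps(c)$ of $m$ neurons in $N_0$, each $c\in C$ with $level(c)\ge1$ a set $reps(c)$ of $m$ neurons in $N_{level(c)}$, all pairwise disjoint. $E$ is a set of pairs $(u,v)$ with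 $v\in reps(c)$ and $u\in reps(c')$ for some child $c'$ of $c$; for $u\in N_{\ell-1}$, $v\in N_\ell$, $w(u,v)=1$ iff $(u,v)\in E$, else $0$. Threshold $\tau=ar_2km(1-\epsilon)$. A fixed set $F$ of neurons is failed (failed neurons never fire). Constraints: for every concept $c$, at least $m(1-\epsilon)$ neurons of $reps(c)$ are not in $F$; and for every $c$ with $level(c)\ge1$, every $v\in reps(c)$ and every child $c'$ of $c$, there are at least $am(1-\epsilon)$ neurons $u\in reps(c')\setminus F$ with $(u,v)\in E$. Input $B\subseteq C_0$ presented at time 0: a layer-0 neuron fires at time 0 iff it is in $\bigcup_{b\in B}reps(b)\setminus F$, and no layer-0 neuron fires at any other time. A non-failed $v\in N_\ell$, $\ell\ge1$, does not fire at time 0 and fires at time $t\ge1$ iff $\sum_{u\in N_{\ell-1}}w(u,v)x_u(t-1)\ge\tau$, where $x_u(s)\in\{0,1\}$ indicates whether $u$ fires at time $s$. *)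

theory Defs
  imports Complex_Main
begin

text \<open>Concepts have type 'c, neurons type 'n. The universal concept set D is partitioned
  into D_0,...,D_lmax via a level function: D_l = {c \<in> D. level c = l}.\<close>

definition concept_hierarchy ::
  "nat \<Rightarrow> nat \<Rightarrow> nat \<Rightarrow> 'c set \<Rightarrow> ('c \<Rightarrow> nat) \<Rightarrow> 'c set \<Rightarrow> ('c \<Rightarrow> 'c set) \<Rightarrow> bool" where
  "concept_hierarchy lmax n k D level C children \<longleftrightarrow>
     lmax > 0 \<and> n > 0 \<and> k > 0 \<and>
     (\<forall>c\<in>D. level c \<le> lmax) \<and>
     finite {c\<in>D. level c = 0} \<and> card {c\<in>D. level c = 0} = n \<and>
     C \<subseteq> D \<and>
     finite {c\<in>C. level c = lmax} \<and> card {c\<in>C. level c = lmax} = k \<and>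
     (\<forall>c\<in>C. 1 \<le> level c \<longrightarrow>
        children c \<subseteq> {c'\<in>C. level c' = level c - 1} \<and>
        finite (children c) \<and> card (children c) = k) \<and>
     (\<forall>c\<in>C. \<forall>c'\<in>C. 1 \<le> level c \<longrightarrow> level c' = level c \<longrightarrow> c \<noteq> c' \<longrightarrow>
        children c \<inter> children c' = {})"

primrec Blev ::
  "'c set \<Rightarrow> ('c \<Rightarrow> nat) \<Rightarrow> ('c \<Rightarrow> 'c set) \<Rightarrow> nat \<Rightarrow> real \<Rightarrow> 'c set \<Rightarrow> nat \<Rightarrow> 'c set" where
  "Blev C level children k r B 0 = B \<inter> {c\<in>C. level c = 0}"
| "Blev C level children k r B (Suc l) =
     {c\<in>C. level c = Suc l \<and> real (card (children c \<inter> Blev C level children k r B l)) \<ge> r * real k}"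

definition supp ::
  "nat \<Rightarrow> 'c set \<Rightarrow> ('c \<Rightarrow> nat) \<Rightarrow> ('c \<Rightarrow> 'c set) \<Rightarrow> nat \<Rightarrow> real \<Rightarrow> 'c set \<Rightarrow> 'c set" where
  "supp lmax C level children k r B = (\<Union>l\<in>{0..lmax}. Blev C level children k r B l)"

definition network_ok ::
  "nat \<Rightarrow> 'c set \<Rightarrow> ('c \<Rightarrow> nat) \<Rightarrow> 'c set \<Rightarrow> ('c \<Rightarrow> 'c set) \<Rightarrow>
   'n set \<Rightarrow> ('n \<Rightarrow> nat) \<Rightarrow> ('c \<Rightarrow> 'n set) \<Rightarrow> ('n \<times> 'n) set \<Rightarrow> 'n set \<Rightarrow>
   nat \<Rightarrow> real \<Rightarrow> real \<Rightarrow> bool" where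
  "network_ok lmax D level C children N layer reps E F m a \<epsilon> \<longleftrightarrow>
     finite N \<and> (\<forall>u\<in>N. layer u \<le> lmax) \<and>
     (\<forall>c\<in>D. level c = 0 \<longrightarrow> reps c \<subseteq> {u\<in>N. layer u = 0} \<and> card (reps c) = m) \<and>
     (\<forall>c\<in>C. 1 \<le> level c \<longrightarrow> reps c \<subseteq> {u\<in>N. layer u = level c} \<and> card (reps c) = m) \<and>
     (\<forall>c\<in>{c\<in>D. level c = 0} \<union> {c\<in>C. 1 \<le> level c}.
        \<forall>c'\<in>{c\<in>D. level c = 0} \<union> {c\<in>C. 1 \<le> level c}.
          c \<noteq> c' \<longrightarrow> reps c \<inter> reps c' = {}) \<and>
     (\<forall>(u, v)\<in>E. \<exists>c\<in>C. 1 \<le> level c \<and> v \<in> reps c \<and> (\<exists>c'\<in>children c. u \<in> reps c')) \<and>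
     (\<forall>c\<in>{c\<in>D. level c = 0} \<union> {c\<in>C. 1 \<le> level c}.
        real (card (reps c - F)) \<ge> real m * (1 - \<epsilon>)) \<and>
     (\<forall>c\<in>C. 1 \<le> level c \<longrightarrow> (\<forall>v\<in>reps c. \<forall>c'\<in>children c.
        real (card {u \<in> reps c' - F. (u, v) \<in> E}) \<ge> a * real m * (1 - \<epsilon>)))"

definition weight :: "('n \<times> 'n) set \<Rightarrow> 'n \<Rightarrow> 'n \<Rightarrow> real" where
  "weight E u v = (if (u, v) \<in> E then 1 else 0)"

definition firing ::
  "'n set \<Rightarrow> ('n \<Rightarrow> nat) \<Rightarrow> ('c \<Rightarrow> 'n set) \<Rightarrow> ('n \<times> 'n) set \<Rightarrow> 'n set \<Rightarrow> real \<Rightarrow>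
   'c set \<Rightarrow> ('n \<Rightarrow> nat \<Rightarrow> bool) \<Rightarrow> bool" where
  "firing N layer reps E F \<tau> B x \<longleftrightarrow>
     (\<forall>u\<in>N. \<forall>t. u \<in> F \<longrightarrow> \<not> x u t) \<and>
     (\<forall>u\<in>N. layer u = 0 \<longrightarrow>
        (x u 0 \<longleftrightarrow> u \<in> (\<Union>b\<in>B. reps b) - F) \<and> (\<forall>t>0. \<not> x u t)) \<and>
     (\<forall>v\<in>N. 1 \<le> layer v \<longrightarrow> v \<notin> F \<longrightarrow>
        \<not> x v 0 \<and>
        (\<forall>t\<ge>1. x v t \<longleftrightarrow>
           (\<Sum>u\<in>{u\<in>N. layer u = layer v - 1}. weight E u v * (if x u (t - 1) then 1 else 0)) \<ge> \<tau>))"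

end

theory Submission
  imports Defs
begin

text \<open>Induction on the level: every non-failed representative of a concept in \<open>B(l)\<close> fires
  at time \<open>l\<close>. If \<open>c \<in> B(l+1)\<close>, at least \<open>r\<^sub>2k\<close> children of \<open>c\<close> lie in \<open>B(l)\<close>, and each of
  them contributes at least \<open>am(1-\<epsilon>)\<close> non-failed, hence firing, in-neighbours of any
  \<open>v \<in> reps(c)\<close>; the representative sets are disjoint, so \<open>v\<close> receives at least
  \<open>ar\<^sub>2km(1-\<epsilon>) = \<tau>\<close> and fires at time \<open>l+1\<close>. Since at least \<open>m(1-\<epsilon>)\<close> representatives are
  non-failed, the claim follows.\<close>

lemma concept_hierarchy_subset:
  "concept_hierarchy lmax n k D level C children \<Longrightarrow> C \<subseteq> D"
  unfolding concept_hierarchy_def by blast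

lemma concept_hierarchy_children:
  assumes "concept_hierarchy lmax n k D level C children" and "c \<in> C" and "1 \<le> level c"
  shows "children c \<subseteq> {c'\<in>C. level c' = level c - 1}" and "finite (children c)"
  using assms unfolding concept_hierarchy_def by blast+

lemma Blev_level:
  assumes "c \<in> Blev C level children k r B l"
  shows "c \<in> C" and "level c = l"
  using assms by (cases l; simp)+

lemma network_ok_reps_layer:
  assumes "network_ok lmax D level C children N layer reps E F m a \<epsilon>"
    and "C \<subseteq> D" and "c \<in> C"
  shows "reps c \<subseteq> {u\<in>N. layer u = level c}"
proof (cases "level c = 0")
  case True
  moreover have "c \<in> D" using assms(2,3) by blast
  ultimately show ?thesis using assms(1) unfolding network_ok_def by auto
next
  case False
  with assms show ?thesis unfolding network_ok_def by simp
qed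

lemma network_ok_finite_reps:
  assumes "network_ok lmax D level C children N layer reps E F m a \<epsilon>"
    and "C \<subseteq> D" and "c \<in> C"
  shows "finite (reps c)"
proof (rule finite_subset)
  show "reps c \<subseteq> N" using network_ok_reps_layer[OF assms] by blast
  show "finite N" using assms(1) unfolding network_ok_def by blast
qed

lemma network_ok_reps_disjoint:
  assumes "network_ok lmax D level C children N layer reps E F m a \<epsilon>"
    and "C \<subseteq> D" and "c \<in> C" and "c' \<in> C" and "c \<noteq> c'"
  shows "reps c \<inter> reps c' = {}"
proof -
  have "c \<in> {c\<in>D. level c = 0} \<union> {c\<in>C. 1 \<le> level c}"
    and "c' \<in> {c\<in>D. level c = 0} \<union> {c\<in>C. 1 \<le> level c}"
    using assms(2-4) by auto
  with assms(1,5) show ?thesis unfolding network_ok_def by blast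
qed

lemma network_ok_card_live_reps:
  assumes "network_ok lmax D level C children N layer reps E F m a \<epsilon>"
    and "C \<subseteq> D" and "c \<in> C"
  shows "real m * (1 - \<epsilon>) \<le> real (card (reps c - F))"
proof -
  have "c \<in> {c\<in>D. level c = 0} \<union> {c\<in>C. 1 \<le> level c}" using assms(2,3) by auto
  with assms(1) show ?thesis unfolding network_ok_def by blast
qed

lemma network_ok_card_live_inputs:
  assumes "network_ok lmax D level C children N layer reps E F m a \<epsilon>"
    and "c \<in> C" and "1 \<le> level c" and "v \<in> reps c" and "c' \<in> children c"
  shows "a * real m * (1 - \<epsilon>) \<le> real (card {u \<in> reps c' - F. (u, v) \<in> E})"
  using assms unfolding network_ok_def by blast

lemma card_UN_disjoint_lower_bound:
  assumes "finite K" and "\<And>i. i \<in> K \<Longrightarrow> finite (A i)"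
    and "\<And>i j. i \<in> K \<Longrightarrow> j \<in> K \<Longrightarrow> i \<noteq> j \<Longrightarrow> A i \<inter> A j = {}"
    and "\<And>i. i \<in> K \<Longrightarrow> s \<le> real (card (A i))"
  shows "real (card K) * s \<le> real (card (\<Union>i\<in>K. A i))"
proof -
  have "real (card K) * s = (\<Sum>i\<in>K. s)" by simp
  also have "\<dots> \<le> (\<Sum>i\<in>K. real (card (A i)))" using assms(4) by (rule sum_mono)
  also have "\<dots> = real (card (\<Union>i\<in>K. A i))"
    using assms(1-3) by (simp add: card_UN_disjoint)
  finally show ?thesis .
qed

lemma network_ok_card_live_inputs_from:
  assumes CH: "concept_hierarchy lmax n k D level C children"
    and NO: "network_ok lmax D level C children N layer reps E F m a \<epsilon>"
    and "c \<in> C" and "1 \<le> level c" and "v \<in> reps c" and "K \<subseteq> children c"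
  shows "real (card K) * (a * real m * (1 - \<epsilon>))
           \<le> real (card {u \<in> (\<Union>c'\<in>K. reps c') - F. (u, v) \<in> E})"
proof -
  have CD: "C \<subseteq> D" using CH by (rule concept_hierarchy_subset)
  have KC: "K \<subseteq> C" and "finite K"
    using concept_hierarchy_children[OF CH \<open>c \<in> C\<close> \<open>1 \<le> level c\<close>] \<open>K \<subseteq> children c\<close>
    by (auto intro: finite_subset)
  have "{u \<in> (\<Union>c'\<in>K. reps c') - F. (u, v) \<in> E} = (\<Union>c'\<in>K. {u \<in> reps c' - F. (u, v) \<in> E})"
    by blast
  moreover have "real (card K) * (a * real m * (1 - \<epsilon>))
                   \<le> real (card (\<Union>c'\<in>K. {u \<in> reps c' - F. (u, v) \<in> E}))"
  proof (rule card_UN_disjoint_lower_bound[OF \<open>finite K\<close>])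
    fix c' assume "c' \<in> K"
    then show "finite {u \<in> reps c' - F. (u, v) \<in> E}"
      using network_ok_finite_reps[OF NO CD] KC by auto
    show "a * real m * (1 - \<epsilon>) \<le> real (card {u \<in> reps c' - F. (u, v) \<in> E})"
      using network_ok_card_live_inputs[OF NO assms(3-5)] \<open>c' \<in> K\<close> assms(6) by blast
  next
    fix c1 c2 assume "c1 \<in> K" "c2 \<in> K" "c1 \<noteq> c2"
    then have "reps c1 \<inter> reps c2 = {}" using network_ok_reps_disjoint[OF NO CD] KC by blast
    then show "{u \<in> reps c1 - F. (u, v) \<in> E} \<inter> {u \<in> reps c2 - F. (u, v) \<in> E} = {}" by blast
  qed
  ultimately show ?thesis by simp
qed

lemma sum_weight_indicator:
  assumes "finite L"
  shows "(\<Sum>u\<in>L. weight E u v * (if P u then 1 else 0)) = real (card {u\<in>L. (u, v) \<in> E \<and> P u})"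
proof -
  have "(\<Sum>u\<in>L. weight E u v * (if P u then 1 else 0))
          = (\<Sum>u\<in>L. if (u, v) \<in> E \<and> P u then 1 else 0)"
    by (rule sum.cong) (simp_all add: weight_def)
  also have "\<dots> = real (card {u\<in>L. (u, v) \<in> E \<and> P u})"
    using assms by (simp add: sum.If_cases Int_def)
  finally show ?thesis .
qed

lemma firing_input_layer:
  assumes "firing N layer reps E F \<tau> B x"
    and "u \<in> N" and "layer u = 0" and "b \<in> B" and "u \<in> reps b - F"
  shows "x u 0"
  using assms unfolding firing_def by blast

lemma firing_Suc_iff:
  assumes "firing N layer reps E F \<tau> B x" and "finite N"
    and "v \<in> N" and "v \<notin> F" and "layer v = Suc l"
  shows "x v (Suc l) \<longleftrightarrow> \<tau> \<le> real (card {u\<in>N. layer u = l \<and> (u, v) \<in> E \<and> x u l})"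
proof -
  have "x v (Suc l) \<longleftrightarrow>
          \<tau> \<le> (\<Sum>u\<in>{u\<in>N. layer u = l}. weight E u v * (if x u l then 1 else 0))"
    using assms(1,3-5) unfolding firing_def by fastforce
  also have "\<dots> \<longleftrightarrow> \<tau> \<le> real (card {u\<in>N. layer u = l \<and> (u, v) \<in> E \<and> x u l})"
    using \<open>finite N\<close> by (simp add: sum_weight_indicator conj_assoc)
  finally show ?thesis .
qed

lemma Blev_live_reps_fire:
  assumes CH: "concept_hierarchy lmax n k D level C children"
    and NO: "network_ok lmax D level C children N layer reps E F m a \<epsilon>"
    and FI: "firing N layer reps E F \<tau> B x"
    and "a > 0" and "\<epsilon> \<le> 1" and \<tau>: "\<tau> \<le> a * r * real k * real m * (1 - \<epsilon>)"
    and "c \<in> Blev C level children k r B l" and "v \<in> reps c - F"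
  shows "x v l"
  using assms(7,8)
proof (induction l arbitrary: c v)
  case 0
  have "c \<in> B" and "c \<in> C" and "level c = 0" using "0.prems"(1) by auto
  then have "reps c \<subseteq> {v\<in>N. layer v = 0}"
    using network_ok_reps_layer[OF NO concept_hierarchy_subset[OF CH] \<open>c \<in> C\<close>] by simp
  with "0.prems"(2) show ?case using firing_input_layer[OF FI _ _ \<open>c \<in> B\<close>] by blast
next
  case (Suc l)
  have CD: "C \<subseteq> D" using CH by (rule concept_hierarchy_subset)
  have "c \<in> C" and "level c = Suc l"
    and many: "r * real k \<le> real (card (children c \<inter> Blev C level children k r B l))"
    using Suc.prems(1) by auto
  have "finite N" using NO unfolding network_ok_def by blast
  have v_layer: "v \<in> N" "v \<notin> F" "layer v = Suc l"
    using Suc.prems(2) network_ok_reps_layer[OF NO CD \<open>c \<in> C\<close>] \<open>level c = Suc l\<close> by auto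
  define K where "K = children c \<inter> Blev C level children k r B l"
  define Live where "Live = {u \<in> (\<Union>c'\<in>K. reps c') - F. (u, v) \<in> E}"
  have "Live \<subseteq> {u\<in>N. layer u = l \<and> (u, v) \<in> E \<and> x u l}"
  proof
    fix u assume "u \<in> Live"
    then obtain c' where "c' \<in> Blev C level children k r B l" "u \<in> reps c' - F" "(u, v) \<in> E"
      unfolding Live_def K_def by blast
    moreover from this(1) have "reps c' \<subseteq> {u\<in>N. layer u = l}"
      using network_ok_reps_layer[OF NO CD] Blev_level by fastforce
    ultimately show "u \<in> {u\<in>N. layer u = l \<and> (u, v) \<in> E \<and> x u l}" using Suc.IH by blast
  qed
  then have "real (card Live) \<le> real (card {u\<in>N. layer u = l \<and> (u, v) \<in> E \<and> x u l})"
    using \<open>finite N\<close> by (simp add: card_mono)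
  moreover have "r * real k * (a * real m * (1 - \<epsilon>)) \<le> real (card K) * (a * real m * (1 - \<epsilon>))"
    using many \<open>a > 0\<close> \<open>\<epsilon> \<le> 1\<close> unfolding K_def by (intro mult_right_mono) auto
  moreover have "real (card K) * (a * real m * (1 - \<epsilon>)) \<le> real (card Live)"
    using network_ok_card_live_inputs_from[OF CH NO \<open>c \<in> C\<close> _ Suc.prems(2)[THEN DiffD1]]
      \<open>level c = Suc l\<close> unfolding K_def Live_def by auto
  ultimately have "\<tau> \<le> real (card {u\<in>N. layer u = l \<and> (u, v) \<in> E \<and> x u l})"
    using \<tau> by (simp add: algebra_simps)
  then show ?case using firing_Suc_iff[OF FI \<open>finite N\<close> v_layer] by blast
qed

theorem theorem8p2:
  fixes lmax n k m :: nat
    and D C :: "'c set" and level :: "'c \<Rightarrow> nat" and children :: "'c \<Rightarrow> 'c set"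
    and N :: "'n set" and layer :: "'n \<Rightarrow> nat" and reps :: "'c \<Rightarrow> 'n set"
    and E :: "('n \<times> 'n) set" and F :: "'n set"
    and r1 r2 \<epsilon> a :: real
    and B :: "'c set" and x :: "'n \<Rightarrow> nat \<Rightarrow> bool"
  assumes "concept_hierarchy lmax n k D level C children"
    and "0 \<le> r1" "r1 \<le> 1" "0 \<le> r2" "r2 \<le> 1" "0 \<le> \<epsilon>" "\<epsilon> \<le> 1"
    and "a > 0" "r1 \<le> a * r2 * (1 - \<epsilon>)"
    and "m > 0"
    and "network_ok lmax D level C children N layer reps E F m a \<epsilon>"
    and "B \<subseteq> {c\<in>C. level c = 0}"
    and "firing N layer reps E F (a * r2 * real k * real m * (1 - \<epsilon>)) B x"
  shows "\<forall>c\<in>supp lmax C level children k r2 B.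
           real (card {v\<in>reps c. x v (level c)}) \<ge> real m * (1 - \<epsilon>)"
proof
  fix c assume "c \<in> supp lmax C level children k r2 B"
  then obtain l where c: "c \<in> Blev C level children k r2 B l" unfolding supp_def by auto
  have CD: "C \<subseteq> D" using assms(1) by (rule concept_hierarchy_subset)
  have "c \<in> C" and "level c = l" using c by (rule Blev_level)+
  have "reps c - F \<subseteq> {v\<in>reps c. x v (level c)}"
    using Blev_live_reps_fire[OF assms(1,11,13,8,7) order_refl c] \<open>level c = l\<close> by blast
  then have "card (reps c - F) \<le> card {v\<in>reps c. x v (level c)}"
    using network_ok_finite_reps[OF assms(11) CD \<open>c \<in> C\<close>] by (intro card_mono) auto
  with network_ok_card_live_reps[OF assms(11) CD \<open>c \<in> C\<close>]
  show "real (card {v\<in>reps c. x v (level c)}) \<ge> real m * (1 - \<epsilon>)" by linarith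
qed

end
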